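(* Let $F$ be a field, $P\in F[t]$ monic irreducible of degree $d\ge1$, $F(P)=F[t]/(P)$, and let $s_P:V_{d-1}\to F(P)^*\otimes\mathbb{Q}$ be the reduction map modulo $P$. Then $\ker(s_P)$ is isomorphic to the $\mathbb{Q}$-vector space generated by symbols $y(a,b)$, $a,b\in F(P)^*$, subject to the relations: $y(a,b)=0$ if $\deg\widetilde a+\deg\widetilde b<d$; $y(a,b)=y(b,a)$; $y(a,b)+y(ab,c)-y(a,c)-y(ac,b)=0$. The isomorphism sends $y(a,b)$ to the element $\widetilde a\,\widetilde b/\widetilde{ab}$ of $V_{d-1}$ (written additively: $\widetilde a+\widetilde b-\widetilde{ab}$).
   Context: $V_{d-1}\subset F(t)^*\otimes\mathbb{Q}$ is the $\mathbb{Q}$-span of all nonzero polynomials of degree $<d$ (the subgroup generated by such polynomials, tensored with $\mathbb{Q}$). For $c\in F(P)^*$, $\widetilde c\in F[t]$ is its unique representative of degree $<d$. *)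

theory Defs
  imports "HOL-Computational_Algebra.Polynomial_Factorial"
begin

definition fin_supp :: "('b \<Rightarrow> rat) \<Rightarrow> bool" where
  "fin_supp w \<longleftrightarrow> finite {x. w x \<noteq> 0}"

definition qspan :: "('b \<Rightarrow> rat) set \<Rightarrow> ('b \<Rightarrow> rat) set" where
  "qspan S = {x. \<exists>T u. finite T \<and> T \<subseteq> S \<and> x = (\<lambda>p. \<Sum>r\<in>T. u r * r p)}"

text \<open>For a commutative monoid whose relevant elements are units, with equality
  relation eq, the element  sum_g g (x) w(g)  of  G (x) Q  vanishes iff some positive
  integer multiple of it is an integral combination giving the identity, i.e.
  the product of the positive-exponent part equals the product of the negative one.\<close>
definition tensorQ_zero :: "('g::comm_monoid_mult \<Rightarrow> 'g \<Rightarrow> bool) \<Rightarrow> ('g \<Rightarrow> rat) \<Rightarrow> bool" where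
  "tensorQ_zero eq w \<longleftrightarrow>
     (\<exists>N::nat. N > 0 \<and> (\<forall>g. of_nat N * w g \<in> \<int>) \<and>
        eq (\<Prod>g\<in>{g. 0 < w g}. g ^ nat \<lfloor>of_nat N * w g\<rfloor>)
           (\<Prod>g\<in>{g. w g < 0}. g ^ nat \<lfloor>- (of_nat N * w g)\<rfloor>))"

text \<open>Representatives of F(P)^*: nonzero polynomials of degree < d.\<close>
definition units_rep :: "'a::field poly \<Rightarrow> 'a poly set" where
  "units_rep P = {a. a \<noteq> 0 \<and> degree a < degree P}"

text \<open>V_{d-1}: formal Q-combinations of nonzero polynomials of degree < d,
  viewed in F(t)^* (x) Q (equality given by zero_FtQ of the difference).\<close>
definition Vspace :: "'a::field poly \<Rightarrow> ('a poly \<Rightarrow> rat) set" where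
  "Vspace P = {w. fin_supp w \<and> {f. w f \<noteq> 0} \<subseteq> units_rep P}"

definition zero_FtQ :: "('a::field poly \<Rightarrow> rat) \<Rightarrow> bool" where
  "zero_FtQ w \<longleftrightarrow> tensorQ_zero (=) w"

text \<open>s_P(w) = 0 in F(P)^* (x) Q (reduction modulo P).\<close>
definition sP_zero :: "'a::field poly \<Rightarrow> ('a poly \<Rightarrow> rat) \<Rightarrow> bool" where
  "sP_zero P w \<longleftrightarrow> tensorQ_zero (\<lambda>x y. x mod P = y mod P) w"

definition yimg :: "'a::field poly \<Rightarrow> 'a poly \<Rightarrow> 'a poly \<Rightarrow> ('a poly \<Rightarrow> rat)" where
  "yimg P a b = (\<lambda>f. (if f = a then 1 else 0) + (if f = b then 1 else 0)
                       - (if f = (a * b) mod P then 1 else 0))"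

definition Phi :: "'a::field poly \<Rightarrow> ('a poly \<times> 'a poly \<Rightarrow> rat) \<Rightarrow> ('a poly \<Rightarrow> rat)" where
  "Phi P c = (\<lambda>f. \<Sum>p\<in>{p. c p \<noteq> 0}. c p * yimg P (fst p) (snd p) f)"

text \<open>Free Q-vector space on symbols y(a,b), a,b in F(P)^*.\<close>
definition freeY :: "'a::field poly \<Rightarrow> ('a poly \<times> 'a poly \<Rightarrow> rat) set" where
  "freeY P = {c. fin_supp c \<and> {p. c p \<noteq> 0} \<subseteq> units_rep P \<times> units_rep P}"

definition ygen :: "'a poly \<Rightarrow> 'a poly \<Rightarrow> ('a poly \<times> 'a poly \<Rightarrow> rat)" where
  "ygen a b = (\<lambda>q. if q = (a, b) then 1 else 0)"

definition rels :: "'a::field poly \<Rightarrow> ('a poly \<times> 'a poly \<Rightarrow> rat) set" where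
  "rels P =
     {ygen a b | a b. a \<in> units_rep P \<and> b \<in> units_rep P \<and> degree a + degree b < degree P}
   \<union> {(\<lambda>q. ygen a b q - ygen b a q) | a b. a \<in> units_rep P \<and> b \<in> units_rep P}
   \<union> {(\<lambda>q. ygen a b q + ygen ((a * b) mod P) c q - ygen a c q - ygen ((a * c) mod P) b q)
       | a b c. a \<in> units_rep P \<and> b \<in> units_rep P \<and> c \<in> units_rep P}"

end

(*
  Surjectivity onto the kernel: if w is killed by reduction modulo P, then for some N > 0 the
  vector N w has integer coefficients, and its positive and negative parts are multisets X, Y of
  residues with prod X = prod Y mod P.  The telescoping sums y(1,x1) + y(x1,x2) + y(x1 x2,x3) + ...
  over X and over Y have images under Phi whose difference is N w.

  Injectivity is proved dually.  A Q-linear functional phi vanishing on the relations gives a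
  normalised symmetric 2-cocycle f(a,b) = phi(y(a,b)) on F(P)^*.  As Q is divisible, the central
  extension defined by f splits, so f(a,b) = g(a) + g(b) - g(ab).  Since f(a,b) = 0 whenever
  deg a + deg b < d, the function g is additive on such products, and unique factorisation in
  F[t] makes the sum of g over a factorisation depend only on the product.  Hence
  phi(c) = sum_x Phi(c)(x) g(x) = 0 whenever Phi(c) vanishes in F(t)^* (x) Q, so such c lie in the
  span of the relations.
*)
theory Submission
  imports Defs "HOL-Algebra.Group" "HOL-Library.Function_Algebras"
begin

section \<open>Extending additive maps into a field of characteristic zero\<close>

text \<open>Partial additive maps are represented by their graphs, so that the union of a chain of them
  is again one.\<close>

definition (in group) additive_graph :: "('a \<times> 'c::field_char_0) set \<Rightarrow> bool" where
  "additive_graph M \<longleftrightarrow> M \<subseteq> carrier G \<times> UNIV \<and> single_valued M \<and> (\<one>, 0) \<in> M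
     \<and> (\<forall>x r y s. (x, r) \<in> M \<longrightarrow> (y, s) \<in> M \<longrightarrow> (x \<otimes> y, r + s) \<in> M)
     \<and> (\<forall>x r. (x, r) \<in> M \<longrightarrow> (inv x, - r) \<in> M)"

context group
begin

lemma additive_graph_carrier: "additive_graph M \<Longrightarrow> (x, r) \<in> M \<Longrightarrow> x \<in> carrier G"
  unfolding additive_graph_def by blast

lemma additive_graph_unique: "additive_graph M \<Longrightarrow> (x, r) \<in> M \<Longrightarrow> (x, s) \<in> M \<Longrightarrow> r = s"
  unfolding additive_graph_def single_valued_def by blast

lemma additive_graph_one: "additive_graph M \<Longrightarrow> (\<one>, 0) \<in> M"
  unfolding additive_graph_def by blast

lemma additive_graph_mult:
  "additive_graph M \<Longrightarrow> (x, r) \<in> M \<Longrightarrow> (y, s) \<in> M \<Longrightarrow> (x \<otimes> y, r + s) \<in> M"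
  unfolding additive_graph_def by blast

lemma additive_graph_inv: "additive_graph M \<Longrightarrow> (x, r) \<in> M \<Longrightarrow> (inv x, - r) \<in> M"
  unfolding additive_graph_def by blast

lemma additive_graph_int_pow:
  assumes M: "additive_graph M" and xr: "(x, r) \<in> M"
  shows "(x [^] (n::int), of_int n * r) \<in> M"
proof -
  have nat_pow: "(x [^] (k::nat), of_nat k * r) \<in> M" for k
  proof (induction k)
    case 0
    then show ?case using additive_graph_one[OF M] by simp
  next
    case (Suc k)
    then have "(x [^] k \<otimes> x, of_nat k * r + r) \<in> M" by (rule additive_graph_mult[OF M _ xr])
    then show ?case by (simp add: algebra_simps)
  qed
  show ?thesis
  proof (cases "n \<ge> 0")
    case True
    then have "x [^] n = x [^] nat n" "(of_int n :: 'c) = of_nat (nat n)" by simp_all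
    then show ?thesis using nat_pow by (simp only:)
  next
    case False
    have "x [^] n = inv (x [^] nat (- n))" using False by (subst int_pow_def2) simp
    moreover have "(of_int n :: 'c) * r = - (of_nat (nat (- n)) * r)" using False by simp
    ultimately show ?thesis using additive_graph_inv[OF M nat_pow] by (simp only:)
  qed
qed

lemma additive_graph_Union:
  assumes "\<C> \<noteq> {}" and "subset.chain {M. additive_graph M} \<C>"
  shows "additive_graph (\<Union>\<C>)"
proof -
  have sub: "\<And>M. M \<in> \<C> \<Longrightarrow> additive_graph M"
    using assms(2) unfolding subset.chain_def by auto
  have two: "\<exists>M\<in>\<C>. p \<in> M \<and> q \<in> M" if "p \<in> \<Union>\<C>" "q \<in> \<Union>\<C>" for p q
    using that assms(2) unfolding subset.chain_def by blast
  show ?thesis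
    unfolding additive_graph_def single_valued_def
  proof (intro conjI allI impI)
    show "\<Union>\<C> \<subseteq> carrier G \<times> UNIV" using sub additive_graph_carrier by fast
    show "(\<one>, 0) \<in> \<Union>\<C>" using sub assms(1) additive_graph_one by blast
  next
    fix x r s assume "(x, r) \<in> \<Union>\<C>" "(x, s) \<in> \<Union>\<C>"
    then show "r = s" using two sub additive_graph_unique by meson
  next
    fix x r y s assume "(x, r) \<in> \<Union>\<C>" "(y, s) \<in> \<Union>\<C>"
    then show "(x \<otimes> y, r + s) \<in> \<Union>\<C>" using two sub additive_graph_mult by (meson UnionI)
  next
    fix x r assume "(x, r) \<in> \<Union>\<C>"
    then show "(inv x, - r) \<in> \<Union>\<C>" using sub additive_graph_inv by blast
  qed
qed

lemma additive_graph_of_subgroup: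
  assumes H: "subgroup H G" and h: "\<And>x y. x \<in> H \<Longrightarrow> y \<in> H \<Longrightarrow> h (x \<otimes> y) = h x + h y"
  shows "additive_graph ((\<lambda>x. (x, h x)) ` H)"
proof -
  interpret H: subgroup H G by (rule H)
  have h_one: "h \<one> = 0" using h[of \<one> \<one>] by simp
  have h_inv: "h (inv x) = - h x" if "x \<in> H" for x
    using h[of x "inv x"] that h_one by (simp add: eq_neg_iff_add_eq_0 add.commute)
  have graph_iff: "(x, r) \<in> (\<lambda>x. (x, h x)) ` H \<longleftrightarrow> x \<in> H \<and> r = h x" for x r
    by blast
  show ?thesis
    unfolding additive_graph_def single_valued_def
  proof (intro conjI allI impI)
    show "(\<lambda>x. (x, h x)) ` H \<subseteq> carrier G \<times> UNIV" using H.subset by blast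
  qed (simp_all add: graph_iff h h_one h_inv)
qed

lemma maximal_additive_graph:
  assumes "additive_graph \<Gamma>"
  obtains M where "additive_graph M" "\<Gamma> \<subseteq> M" "\<forall>M'. additive_graph M' \<longrightarrow> M \<subseteq> M' \<longrightarrow> M' = M"
proof -
  define \<A> where "\<A> = {M. additive_graph M \<and> \<Gamma> \<subseteq> M}"
  have "\<exists>M\<in>\<A>. \<forall>M'\<in>\<A>. M \<subseteq> M' \<longrightarrow> M' = M"
  proof (rule subset_Zorn_nonempty)
    show "\<A> \<noteq> {}" using assms unfolding \<A>_def by blast
  next
    fix \<C> assume "\<C> \<noteq> {}" and chain: "subset.chain \<A> \<C>"
    then have "\<C> \<subseteq> \<A>" by (simp add: subset.chain_def)
    have "additive_graph (\<Union>\<C>)"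
      using \<open>\<C> \<noteq> {}\<close> chain by (intro additive_graph_Union) (auto simp: subset.chain_def \<A>_def)
    moreover obtain M0 where "M0 \<in> \<C>" using \<open>\<C> \<noteq> {}\<close> by blast
    then have "\<Gamma> \<subseteq> \<Union>\<C>" using \<open>\<C> \<subseteq> \<A>\<close> unfolding \<A>_def by blast
    ultimately show "\<Union>\<C> \<in> \<A>" unfolding \<A>_def by blast
  qed
  then obtain M where M: "additive_graph M" "\<Gamma> \<subseteq> M" and max: "\<forall>M'\<in>\<A>. M \<subseteq> M' \<longrightarrow> M' = M"
    unfolding \<A>_def by blast
  have "M' = M" if "additive_graph M'" "M \<subseteq> M'" for M'
    using max that M(2) unfolding \<A>_def by blast
  with M show ?thesis using that by blast
qed

lemma additive_graph_slope:
  assumes M: "additive_graph M" and x: "x \<in> carrier G"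
  obtains t where "\<And>j r. (x [^] (j::int), r) \<in> M \<Longrightarrow> r = of_int j * t"
proof (cases "\<exists>j r. j \<noteq> 0 \<and> (x [^] (j::int), r) \<in> M")
  case True
  then obtain j0 r0 where j0: "j0 \<noteq> 0" and r0: "(x [^] (j0::int), r0) \<in> M" by blast
  show ?thesis
  proof (rule that[of "r0 / of_int j0"])
    fix j r assume jr: "(x [^] (j::int), r) \<in> M"
    have "(x [^] (j * j0), of_int j0 * r) \<in> M"
      using additive_graph_int_pow[OF M jr, of j0] x by (simp add: int_pow_pow)
    moreover have "(x [^] (j * j0), of_int j * r0) \<in> M"
      using additive_graph_int_pow[OF M r0, of j] x by (simp add: int_pow_pow mult.commute)
    ultimately have "of_int j0 * r = of_int j * r0" by (rule additive_graph_unique[OF M])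
    then show "r = of_int j * (r0 / of_int j0)" using j0 by (simp add: field_simps)
  qed
next
  case False
  show ?thesis
  proof (rule that[of 0])
    fix j r assume jr: "(x [^] (j::int), r) \<in> M"
    then have "j = 0" using False by blast
    with jr have "(\<one>, r) \<in> M" by simp
    then show "r = of_int j * 0" using additive_graph_unique[OF M _ additive_graph_one[OF M]] by simp
  qed
qed

lemma int_pow_diff_eq_inv_mult:
  assumes "k \<in> carrier G" "k' \<in> carrier G" "x \<in> carrier G" and "k \<otimes> x [^] n = k' \<otimes> x [^] (n'::int)"
  shows "x [^] (n - n') = inv k \<otimes> k'"
proof -
  have "x [^] (n - n') = x [^] n \<otimes> inv (x [^] n')"
    using assms(3) by (rule int_pow_diff)
  also have "\<dots> = inv k \<otimes> (k \<otimes> x [^] n) \<otimes> inv (x [^] n')"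
    using assms(1,3) by (simp add: m_assoc[symmetric])
  also have "\<dots> = inv k \<otimes> k'"
    unfolding assms(4) using assms(1-3) by (simp add: m_assoc)
  finally show ?thesis .
qed

end

lemma (in comm_group) additive_graph_adjoin:
  assumes M: "additive_graph M" and x: "x \<in> carrier G"
    and slope: "\<And>j r. (x [^] (j::int), r) \<in> M \<Longrightarrow> r = of_int j * t"
  shows "additive_graph {(k \<otimes> x [^] n, r + of_int n * t) | k r (n::int). (k, r) \<in> M}"
    (is "additive_graph ?M'")
  unfolding additive_graph_def single_valued_def
proof (intro conjI allI impI)
  have MG: "k \<in> carrier G" if "(k, r) \<in> M" for k r
    using additive_graph_carrier[OF M that] .
  then show "?M' \<subseteq> carrier G \<times> UNIV" using x by auto
  have "(\<one> \<otimes> x [^] (0::int), 0 + of_int 0 * t) \<in> ?M'" using additive_graph_one[OF M] by blast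
  then show "(\<one>, 0) \<in> ?M'" by simp
next
  fix z r s assume "(z, r) \<in> ?M'" "(z, s) \<in> ?M'"
  then obtain k r1 n k' r1' n' where e: "(k, r1) \<in> M" "(k', r1') \<in> M"
    "z = k \<otimes> x [^] n" "r = r1 + of_int n * t" "z = k' \<otimes> x [^] n'" "s = r1' + of_int n' * t"
    by blast
  have "x [^] (n - n') = inv k \<otimes> k'"
    using e additive_graph_carrier[OF M] x by (intro int_pow_diff_eq_inv_mult) auto
  then have "(x [^] (n - n'), - r1 + r1') \<in> M"
    using additive_graph_mult[OF M additive_graph_inv[OF M e(1)] e(2)] by simp
  then have "- r1 + r1' = of_int (n - n') * t" by (rule slope)
  then show "r = s" using e by (simp add: algebra_simps)
next
  fix z r y s assume "(z, r) \<in> ?M'" "(y, s) \<in> ?M'"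
  then obtain k r1 n k' r1' n' where e: "(k, r1) \<in> M" "(k', r1') \<in> M"
    "z = k \<otimes> x [^] n" "r = r1 + of_int n * t" "y = k' \<otimes> x [^] n'" "s = r1' + of_int n' * t"
    by blast
  have "z \<otimes> y = (k \<otimes> k') \<otimes> x [^] (n + n')"
    using e additive_graph_carrier[OF M] x by (simp add: int_pow_mult m_ac)
  moreover have "r + s = (r1 + r1') + of_int (n + n') * t" using e by (simp add: algebra_simps)
  ultimately show "(z \<otimes> y, r + s) \<in> ?M'" using additive_graph_mult[OF M e(1,2)] by blast
next
  fix z r assume "(z, r) \<in> ?M'"
  then obtain k r1 n where e: "(k, r1) \<in> M" "z = k \<otimes> x [^] n" "r = r1 + of_int n * t"
    by blast
  have "inv z = inv k \<otimes> x [^] (- n)"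
    using e additive_graph_carrier[OF M] x by (simp add: int_pow_neg inv_mult)
  moreover have "- r = - r1 + of_int (- n) * t" using e by simp
  ultimately show "(inv z, - r) \<in> ?M'" using additive_graph_inv[OF M e(1)] by blast
qed

lemma (in comm_group) additive_graph_extend:
  assumes M: "additive_graph M" and x: "x \<in> carrier G"
  obtains M' where "additive_graph M'" "M \<subseteq> M'" "x \<in> Domain M'"
proof -
  obtain t where slope: "\<And>j r. (x [^] (j::int), r) \<in> M \<Longrightarrow> r = of_int j * t"
    using additive_graph_slope[OF M x] by blast
  define M' where "M' = {(k \<otimes> x [^] n, r + of_int n * t) | k r (n::int). (k, r) \<in> M}"
  have shift: "(k \<otimes> x [^] n, r + of_int n * t) \<in> M'" if "(k, r) \<in> M" for k r n
    unfolding M'_def using that by blast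
  have "M \<subseteq> M'"
  proof
    fix p assume p: "p \<in> M"
    then have "(fst p \<otimes> x [^] (0::int), snd p + of_int 0 * t) \<in> M'" by (intro shift) simp
    then show "p \<in> M'" using additive_graph_carrier[OF M, of "fst p" "snd p"] p by simp
  qed
  moreover have "(\<one> \<otimes> x [^] (1::int), 0 + of_int 1 * t) \<in> M'" by (rule shift[OF additive_graph_one[OF M]])
  then have "x \<in> Domain M'" using x by (auto intro: DomainI)
  ultimately show ?thesis
    using that additive_graph_adjoin[OF M x slope] unfolding M'_def by blast
qed

text \<open>\<open>\<rat>\<close> (indeed every field of characteristic zero) is an injective \<open>\<int>\<close>-module.\<close>

lemma (in comm_group) additive_extension:
  fixes h :: "'a \<Rightarrow> 'c::field_char_0"
  assumes H: "subgroup H G" and h: "\<And>x y. x \<in> H \<Longrightarrow> y \<in> H \<Longrightarrow> h (x \<otimes> y) = h x + h y"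
  shows "\<exists>h'. (\<forall>x\<in>H. h' x = h x) \<and> (\<forall>x\<in>carrier G. \<forall>y\<in>carrier G. h' (x \<otimes> y) = h' x + h' y)"
proof -
  define \<Gamma> where "\<Gamma> = (\<lambda>x. (x, h x)) ` H"
  have "additive_graph \<Gamma>" unfolding \<Gamma>_def using H h by (rule additive_graph_of_subgroup)
  then obtain M where M: "additive_graph M" "\<Gamma> \<subseteq> M"
    and maximal: "\<forall>M'. additive_graph M' \<longrightarrow> M \<subseteq> M' \<longrightarrow> M' = M"
    by (rule maximal_additive_graph)
  have total: "\<exists>r. (x, r) \<in> M" if x: "x \<in> carrier G" for x
  proof -
    obtain M' where "additive_graph M'" "M \<subseteq> M'" "x \<in> Domain M'"
      by (rule additive_graph_extend[OF M(1) x])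
    then show ?thesis using maximal by blast
  qed
  define h' where "h' x = (THE r. (x, r) \<in> M)" for x
  have h'_eq: "h' x = r" if xr: "(x, r) \<in> M" for x r
    unfolding h'_def
  proof (rule the_equality)
    show "(x, r) \<in> M" by (rule xr)
    show "s = r" if "(x, s) \<in> M" for s using additive_graph_unique[OF M(1) that xr] .
  qed
  have h'_graph: "(x, h' x) \<in> M" if "x \<in> carrier G" for x
    using total[OF that] h'_eq by blast
  show ?thesis
  proof (intro exI conjI ballI)
    show "h' x = h x" if "x \<in> H" for x
      using that M(2) h'_eq unfolding \<Gamma>_def by blast
    show "h' (x \<otimes> y) = h' x + h' y" if "x \<in> carrier G" "y \<in> carrier G" for x y
      using that by (intro h'_eq additive_graph_mult[OF M(1)] h'_graph)
  qed
qed

definition cocycle_extension :: "('a, 'm) monoid_scheme \<Rightarrow> ('a \<Rightarrow> 'a \<Rightarrow> 'c::ab_group_add) \<Rightarrow> ('c \<times> 'a) monoid" where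
  "cocycle_extension G f = \<lparr>carrier = UNIV \<times> carrier G,
     mult = (\<lambda>x y. (fst x + fst y - f (snd x) (snd y), snd x \<otimes>\<^bsub>G\<^esub> snd y)), one = (0, \<one>\<^bsub>G\<^esub>)\<rparr>"

lemma cocycle_extension_simps [simp]:
  "carrier (cocycle_extension G f) = UNIV \<times> carrier G"
  "x \<otimes>\<^bsub>cocycle_extension G f\<^esub> y = (fst x + fst y - f (snd x) (snd y), snd x \<otimes>\<^bsub>G\<^esub> snd y)"
  "\<one>\<^bsub>cocycle_extension G f\<^esub> = (0, \<one>\<^bsub>G\<^esub>)"
  by (simp_all add: cocycle_extension_def)

context comm_group
begin

lemma comm_group_cocycle_extension:
  fixes f :: "'a \<Rightarrow> 'a \<Rightarrow> 'c::ab_group_add"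
  assumes sym: "\<And>a b. a \<in> carrier G \<Longrightarrow> b \<in> carrier G \<Longrightarrow> f a b = f b a"
    and cocycle: "\<And>a b c. a \<in> carrier G \<Longrightarrow> b \<in> carrier G \<Longrightarrow> c \<in> carrier G \<Longrightarrow>
      f a b + f (a \<otimes> b) c = f b c + f a (b \<otimes> c)"
    and normalized: "\<And>a. a \<in> carrier G \<Longrightarrow> f \<one> a = 0"
  shows "comm_group (cocycle_extension G f)"
proof (rule comm_groupI)
  fix x y z assume "x \<in> carrier (cocycle_extension G f)" "y \<in> carrier (cocycle_extension G f)"
    "z \<in> carrier (cocycle_extension G f)"
  then show "x \<otimes>\<^bsub>cocycle_extension G f\<^esub> y \<otimes>\<^bsub>cocycle_extension G f\<^esub> z
      = x \<otimes>\<^bsub>cocycle_extension G f\<^esub> (y \<otimes>\<^bsub>cocycle_extension G f\<^esub> z)"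
    using cocycle[of "snd x" "snd y" "snd z"] by (auto simp: m_assoc algebra_simps)
next
  fix x assume "x \<in> carrier (cocycle_extension G f)"
  then have x: "snd x \<in> carrier G" by (simp add: mem_Times_iff)
  let ?y = "(f (inv (snd x)) (snd x) - fst x, inv (snd x))"
  have "?y \<otimes>\<^bsub>cocycle_extension G f\<^esub> x = \<one>\<^bsub>cocycle_extension G f\<^esub>" using x by simp
  moreover have "?y \<in> carrier (cocycle_extension G f)" using x by simp
  ultimately show "\<exists>y\<in>carrier (cocycle_extension G f). y \<otimes>\<^bsub>cocycle_extension G f\<^esub> x = \<one>\<^bsub>cocycle_extension G f\<^esub>"
    by blast
qed (auto simp: normalized sym m_comm mem_Times_iff)

lemma subgroup_cocycle_extension:
  fixes f :: "'a \<Rightarrow> 'a \<Rightarrow> 'c::ab_group_add"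
  assumes sym: "\<And>a b. a \<in> carrier G \<Longrightarrow> b \<in> carrier G \<Longrightarrow> f a b = f b a"
    and cocycle: "\<And>a b c. a \<in> carrier G \<Longrightarrow> b \<in> carrier G \<Longrightarrow> c \<in> carrier G \<Longrightarrow>
      f a b + f (a \<otimes> b) c = f b c + f a (b \<otimes> c)"
    and normalized: "\<And>a. a \<in> carrier G \<Longrightarrow> f \<one> a = 0"
  shows "subgroup {x. snd x = \<one>} (cocycle_extension G f)"
proof -
  interpret E: comm_group "cocycle_extension G f"
    using sym cocycle normalized by (rule comm_group_cocycle_extension)
  show ?thesis
  proof (rule E.subgroupI)
    fix x :: "'c \<times> 'a" assume "x \<in> {x. snd x = \<one>}"
    then have "inv\<^bsub>cocycle_extension G f\<^esub> x = (- fst x, \<one>)"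
      by (intro E.inv_equality) (auto simp: normalized mem_Times_iff)
    then show "inv\<^bsub>cocycle_extension G f\<^esub> x \<in> {x. snd x = \<one>}" by simp
  qed (auto simp: normalized mem_Times_iff)
qed

text \<open>The extension \<open>cocycle_extension G f\<close> splits because \<open>'c\<close> is injective; a retraction onto
  \<open>'c\<close> yields the function whose coboundary is \<open>f\<close>.\<close>

lemma symmetric_cocycle_is_coboundary:
  fixes f :: "'a \<Rightarrow> 'a \<Rightarrow> 'c::field_char_0"
  assumes sym: "\<And>a b. a \<in> carrier G \<Longrightarrow> b \<in> carrier G \<Longrightarrow> f a b = f b a"
    and cocycle: "\<And>a b c. a \<in> carrier G \<Longrightarrow> b \<in> carrier G \<Longrightarrow> c \<in> carrier G \<Longrightarrow>
      f a b + f (a \<otimes> b) c = f b c + f a (b \<otimes> c)"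
    and normalized: "\<And>a. a \<in> carrier G \<Longrightarrow> f \<one> a = 0"
  shows "\<exists>g. \<forall>a\<in>carrier G. \<forall>b\<in>carrier G. f a b = g a + g b - g (a \<otimes> b)"
proof -
  let ?E = "cocycle_extension G f"
  interpret E: comm_group ?E using sym cocycle normalized by (rule comm_group_cocycle_extension)
  define Q where "Q = {x :: 'c \<times> 'a. snd x = \<one>}"
  have "subgroup Q ?E" unfolding Q_def using sym cocycle normalized by (rule subgroup_cocycle_extension)
  then have "\<exists>l. (\<forall>x\<in>Q. l x = fst x) \<and> (\<forall>x\<in>carrier ?E. \<forall>y\<in>carrier ?E. l (x \<otimes>\<^bsub>?E\<^esub> y) = l x + l y)"
    by (rule E.additive_extension) (simp add: Q_def normalized)
  then obtain l where l_Q: "\<And>x. x \<in> Q \<Longrightarrow> l x = fst x"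
    and l_add: "\<And>x y. x \<in> carrier ?E \<Longrightarrow> y \<in> carrier ?E \<Longrightarrow> l (x \<otimes>\<^bsub>?E\<^esub> y) = l x + l y"
    by blast
  show ?thesis
  proof (intro exI ballI)
    fix a b assume a: "a \<in> carrier G" and b: "b \<in> carrier G"
    have "l (0, a) + l (0, b) = l ((0, a) \<otimes>\<^bsub>?E\<^esub> (0, b))"
      using a b l_add[of "(0, a)" "(0, b)"] by simp
    also have "\<dots> = l ((- f a b, \<one>) \<otimes>\<^bsub>?E\<^esub> (0, a \<otimes> b))"
      using a b by (simp add: normalized)
    also have "\<dots> = - f a b + l (0, a \<otimes> b)"
      using a b l_add[of "(- f a b, \<one>)" "(0, a \<otimes> b)"] l_Q[of "(- f a b, \<one>)"] by (simp add: Q_def)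
    finally show "f a b = - l (0, a) + - l (0, b) - - l (0, a \<otimes> b)" by (simp add: algebra_simps)
  qed
qed

end

section \<open>Rational combinations and vanishing in \<open>G \<otimes> \<rat>\<close>\<close>

lemma support_sum_subset:
  "{x. (\<Sum>i\<in>I. c i * w i x) \<noteq> (0::rat)} \<subseteq> (\<Union>i\<in>I. {x. w i x \<noteq> 0})"
  by (auto intro: ccontr simp: sum.neutral)

lemma fin_supp_sum:
  assumes "finite I" and "\<And>i. i \<in> I \<Longrightarrow> fin_supp (w i)"
  shows "fin_supp (\<lambda>x. \<Sum>i\<in>I. c i * w i x)"
  using assms support_sum_subset[of c w I] unfolding fin_supp_def by (meson finite_UN_I finite_subset)

lemma fin_supp_linear: "fin_supp c \<Longrightarrow> fin_supp d \<Longrightarrow> fin_supp (\<lambda>q. r * c q + s * d q)"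
  unfolding fin_supp_def by (rule finite_subset[of _ "{q. c q \<noteq> 0} \<union> {q. d q \<noteq> 0}"]) auto

lemma fin_supp_add: "fin_supp c \<Longrightarrow> fin_supp d \<Longrightarrow> fin_supp (\<lambda>q. c q + d q)"
  using fin_supp_linear[of c d 1 1] by simp

lemma fin_supp_diff: "fin_supp c \<Longrightarrow> fin_supp d \<Longrightarrow> fin_supp (\<lambda>q. c q - d q)"
  using fin_supp_linear[of c d 1 "- 1"] by simp

lemma fin_supp_ygen: "fin_supp (ygen a b)"
  unfolding fin_supp_def ygen_def by (rule finite_subset[of _ "{(a, b)}"]) auto

lemma yimg_support: "{f. yimg P a b f \<noteq> 0} \<subseteq> {a, b, a * b mod P}"
  by (auto simp: yimg_def)

lemma fin_supp_yimg: "fin_supp (yimg P a b)"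
  unfolding fin_supp_def by (rule finite_subset[OF yimg_support]) simp

lemma count_sum_replicate_mset:
  "finite A \<Longrightarrow> count (\<Sum>a\<in>A. replicate_mset (k a) a) x = (if x \<in> A then k x else 0)"
  by (induction A rule: finite_induct) auto

lemma prod_mset_sum_replicate_mset:
  "finite A \<Longrightarrow> prod_mset (\<Sum>a\<in>A. replicate_mset (k a) a) = (\<Prod>a\<in>A. a ^ k a)"
  by (induction A rule: finite_induct) auto

lemma prod_mset_repeat_mset: "prod_mset (repeat_mset n X) = prod_mset X ^ n"
  by (induction n) (simp_all add: mult.commute)

lemma set_mset_repeat_mset_subset: "set_mset (repeat_mset n X) \<subseteq> set_mset X"
  by (auto simp flip: count_greater_zero_iff)

lemma prod_mset_diff:
  "prod_mset (X - Y) = (\<Prod>x\<in>{x. count Y x < count X x}. x ^ (count X x - count Y x))"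
proof -
  have "set_mset (X - Y) = {x. count Y x < count X x}"
    by (auto simp flip: count_greater_zero_iff)
  then show ?thesis by (simp add: prod_mset_multiplicity)
qed

lemma sum_mset_eq_sum_count:
  assumes "finite S" and "set_mset Z \<subseteq> S"
  shows "(\<Sum>x\<in>#Z. f x) = (\<Sum>x\<in>S. of_nat (count Z x) * (f x :: 'b::semiring_1))"
  using assms(2)
proof (induction Z)
  case empty
  then show ?case by simp
next
  case (add z Z)
  have "(\<Sum>x\<in>S. of_nat (count (add_mset z Z) x) * f x)
      = (\<Sum>x\<in>S. of_nat (count Z x) * f x + (if x = z then f x else 0))"
    by (intro sum.cong) (auto simp: algebra_simps)
  then show ?case using add assms(1) by (simp add: sum.distrib sum.delta' add.commute)
qed

lemma tensorQ_zero_multisets: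
  fixes w :: "'g::comm_monoid_mult \<Rightarrow> rat"
  assumes fin: "fin_supp w" and zero: "tensorQ_zero cong w"
  obtains N X Y where "N > 0" "set_mset X \<subseteq> {g. w g \<noteq> 0}" "set_mset Y \<subseteq> {g. w g \<noteq> 0}"
    "\<And>g. of_nat (count X g) - of_nat (count Y g) = of_nat N * w g"
    "cong (prod_mset X) (prod_mset Y)"
proof -
  obtain N :: nat where N: "N > 0" "\<And>g. of_nat N * w g \<in> \<int>"
    and XY: "cong (\<Prod>g\<in>{g. 0 < w g}. g ^ nat \<lfloor>of_nat N * w g\<rfloor>)
                (\<Prod>g\<in>{g. w g < 0}. g ^ nat \<lfloor>- (of_nat N * w g)\<rfloor>)"
    using zero unfolding tensorQ_zero_def by blast
  have pos: "finite {g. 0 < w g}" and neg: "finite {g. w g < 0}"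
    using fin unfolding fin_supp_def by (auto elim: finite_subset[rotated])
  define X where "X = (\<Sum>g\<in>{g. 0 < w g}. replicate_mset (nat \<lfloor>of_nat N * w g\<rfloor>) g)"
  define Y where "Y = (\<Sum>g\<in>{g. w g < 0}. replicate_mset (nat \<lfloor>- (of_nat N * w g)\<rfloor>) g)"
  show ?thesis
  proof
    show "N > 0" by (rule N(1))
    show "set_mset X \<subseteq> {g. w g \<noteq> 0}" "set_mset Y \<subseteq> {g. w g \<noteq> 0}"
      by (auto simp: X_def Y_def pos neg count_sum_replicate_mset simp flip: count_greater_zero_iff)
    show "cong (prod_mset X) (prod_mset Y)"
      using XY by (simp add: X_def Y_def pos neg prod_mset_sum_replicate_mset)
  next
    fix g
    obtain k where k: "of_nat N * w g = of_int k" using N(2) Ints_cases by metis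
    have "0 < w g \<longleftrightarrow> 0 < of_nat N * w g" "w g < 0 \<longleftrightarrow> of_nat N * w g < 0"
      using N(1) by (simp_all add: zero_less_mult_iff mult_less_0_iff)
    then have "0 < w g \<longleftrightarrow> 0 < k" "w g < 0 \<longleftrightarrow> k < 0" unfolding k by simp_all
    then show "of_nat (count X g) - of_nat (count Y g) = of_nat N * w g"
      using k by (auto simp: X_def Y_def pos neg count_sum_replicate_mset)
  qed
qed

text \<open>Both \<open>zero_FtQ\<close> (equality in \<open>F[t]\<close>) and \<open>sP_zero\<close> (congruence modulo an
  irreducible \<open>P\<close>) are instances of \<open>tensorQ_zero\<close> for such a relation.\<close>

locale cancellative_congruence =
  fixes cong :: "'g::comm_monoid_mult \<Rightarrow> 'g \<Rightarrow> bool" and C :: "'g set"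
  assumes equivp: "equivp cong"
    and mult_cong: "cong x y \<Longrightarrow> cong (x * z) (y * z)"
    and cancel: "z \<in> C \<Longrightarrow> cong (x * z) (y * z) \<Longrightarrow> cong x y"
    and one_mem: "1 \<in> C"
    and mult_mem: "x \<in> C \<Longrightarrow> y \<in> C \<Longrightarrow> x * y \<in> C"
begin

lemma cong_refl: "cong x x"
  using equivp by (rule equivp_reflp)

lemma cong_sym: "cong x y \<Longrightarrow> cong y x"
  using equivp by (rule equivp_symp)

lemma cong_trans: "cong x y \<Longrightarrow> cong y z \<Longrightarrow> cong x z"
  using equivp by (rule equivp_transp)

lemma cong_mult: "cong x y \<Longrightarrow> cong x' y' \<Longrightarrow> cong (x * x') (y * y')"
  by (metis mult_cong mult.commute cong_trans)

lemma cong_power: "cong x y \<Longrightarrow> cong (x ^ n) (y ^ n)"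
  by (induction n) (simp_all add: cong_refl cong_mult)

lemma prod_mset_mem: "set_mset X \<subseteq> C \<Longrightarrow> prod_mset X \<in> C"
  by (induction X) (simp_all add: one_mem mult_mem)

lemma multisets_imp_tensorQ_zero:
  assumes N: "N > 0" and XC: "set_mset X \<subseteq> C" and YC: "set_mset Y \<subseteq> C"
    and count: "\<And>g. of_nat (count X g) - of_nat (count Y g) = of_nat N * w g"
    and XY: "cong (prod_mset X) (prod_mset Y)"
  shows "tensorQ_zero cong w"
proof -
  have Nw: "of_nat N * w g = of_int (int (count X g) - int (count Y g))" for g
    by (simp flip: count)
  have "0 < w g \<longleftrightarrow> count Y g < count X g" "w g < 0 \<longleftrightarrow> count X g < count Y g" for g
  proof -
    have "0 < w g \<longleftrightarrow> 0 < of_nat N * w g" "w g < 0 \<longleftrightarrow> of_nat N * w g < 0"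
      using N by (simp_all add: zero_less_mult_iff mult_less_0_iff)
    then show "0 < w g \<longleftrightarrow> count Y g < count X g" "w g < 0 \<longleftrightarrow> count X g < count Y g"
      unfolding count[symmetric] by simp_all
  qed
  then have pos: "{g. 0 < w g} = {g. count Y g < count X g}"
    and neg: "{g. w g < 0} = {g. count X g < count Y g}" by auto
  have "prod_mset (X - Y) = (\<Prod>g\<in>{g. 0 < w g}. g ^ nat \<lfloor>of_nat N * w g\<rfloor>)"
    unfolding prod_mset_diff pos Nw floor_of_int by (intro prod.cong) (auto simp: nat_diff_distrib)
  moreover have "prod_mset (Y - X) = (\<Prod>g\<in>{g. w g < 0}. g ^ nat \<lfloor>- (of_nat N * w g)\<rfloor>)"
    unfolding prod_mset_diff neg Nw of_int_minus[symmetric] floor_of_int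
    by (intro prod.cong) (auto simp: nat_diff_distrib)
  moreover have "cong (prod_mset (X - Y)) (prod_mset (Y - X))"
  proof (rule cancel)
    show "prod_mset (X \<inter># Y) \<in> C" using XC by (intro prod_mset_mem) auto
    have "X = (X - Y) + (X \<inter># Y)" "Y = (Y - X) + (X \<inter># Y)"
      by (auto simp: multiset_eq_iff min_def)
    then show "cong (prod_mset (X - Y) * prod_mset (X \<inter># Y)) (prod_mset (Y - X) * prod_mset (X \<inter># Y))"
      using XY by (metis prod_mset.union)
  qed
  moreover have "of_nat N * w g \<in> \<int>" for g unfolding Nw by simp
  ultimately show ?thesis
    unfolding tensorQ_zero_def using N by auto
qed

lemma tensorQ_zero_zero: "tensorQ_zero cong (\<lambda>_. 0)"
  by (rule multisets_imp_tensorQ_zero[of 1 "{#}" "{#}"]) (simp_all add: cong_refl)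

lemma tensorQ_zero_mult_relation:
  assumes "a \<in> C" "b \<in> C" "c \<in> C" and "cong (a * b) c"
  shows "tensorQ_zero cong (\<lambda>g. (if g = a then 1 else 0) + (if g = b then 1 else 0) - (if g = c then 1 else 0))"
  by (rule multisets_imp_tensorQ_zero[of 1 "{#a, b#}" "{#c#}"]) (use assms in auto)

lemma tensorQ_zero_add:
  assumes w: "fin_supp w" "{g. w g \<noteq> 0} \<subseteq> C" "tensorQ_zero cong w"
    and w': "fin_supp w'" "{g. w' g \<noteq> 0} \<subseteq> C" "tensorQ_zero cong w'"
  shows "tensorQ_zero cong (\<lambda>g. w g + w' g)"
proof -
  obtain N :: nat and X Y where N: "N > 0" and "set_mset X \<subseteq> {g. w g \<noteq> 0}" "set_mset Y \<subseteq> {g. w g \<noteq> 0}"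
    and count: "\<And>g. of_nat (count X g) - of_nat (count Y g) = of_nat N * w g"
    and XY: "cong (prod_mset X) (prod_mset Y)"
    by (rule tensorQ_zero_multisets[OF w(1,3)], rule that)
  with w(2) have XC: "set_mset X \<subseteq> C" "set_mset Y \<subseteq> C" by blast+
  obtain N' :: nat and X' Y' where N': "N' > 0" and "set_mset X' \<subseteq> {g. w' g \<noteq> 0}" "set_mset Y' \<subseteq> {g. w' g \<noteq> 0}"
    and count': "\<And>g. of_nat (count X' g) - of_nat (count Y' g) = of_nat N' * w' g"
    and XY': "cong (prod_mset X') (prod_mset Y')"
    by (rule tensorQ_zero_multisets[OF w'(1,3)], rule that)
  with w'(2) have XC': "set_mset X' \<subseteq> C" "set_mset Y' \<subseteq> C" by blast+
  show ?thesis
  proof (rule multisets_imp_tensorQ_zero)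
    show "N * N' > 0" using N N' by simp
    show "set_mset (repeat_mset N' X + repeat_mset N X') \<subseteq> C"
      "set_mset (repeat_mset N' Y + repeat_mset N Y') \<subseteq> C"
      using XC XC' set_mset_repeat_mset_subset[of N' X] set_mset_repeat_mset_subset[of N X']
        set_mset_repeat_mset_subset[of N' Y] set_mset_repeat_mset_subset[of N Y'] by auto
    show "cong (prod_mset (repeat_mset N' X + repeat_mset N X')) (prod_mset (repeat_mset N' Y + repeat_mset N Y'))"
      by (simp add: prod_mset_repeat_mset cong_mult cong_power XY XY')
  next
    fix g
    have "of_nat (count (repeat_mset N' X + repeat_mset N X') g)
        - of_nat (count (repeat_mset N' Y + repeat_mset N Y') g)
        = of_nat N' * (of_nat (count X g) - of_nat (count Y g) :: rat)
          + of_nat N * (of_nat (count X' g) - of_nat (count Y' g))"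
      by (simp add: algebra_simps)
    also have "\<dots> = of_nat (N * N') * (w g + w' g)"
      unfolding count count' by (simp add: algebra_simps)
    finally show "of_nat (count (repeat_mset N' X + repeat_mset N X') g)
        - of_nat (count (repeat_mset N' Y + repeat_mset N Y') g) = of_nat (N * N') * (w g + w' g)" .
  qed
qed

lemma tensorQ_zero_scale:
  assumes w: "fin_supp w" "{g. w g \<noteq> 0} \<subseteq> C" "tensorQ_zero cong w"
  shows "tensorQ_zero cong (\<lambda>g. r * w g)"
proof -
  obtain N :: nat and X Y where N: "N > 0" and "set_mset X \<subseteq> {g. w g \<noteq> 0}" "set_mset Y \<subseteq> {g. w g \<noteq> 0}"
    and count: "\<And>g. of_nat (count X g) - of_nat (count Y g) = of_nat N * w g"
    and XY: "cong (prod_mset X) (prod_mset Y)"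
    by (rule tensorQ_zero_multisets[OF w(1,3)], rule that)
  with w(2) have XC: "set_mset X \<subseteq> C" "set_mset Y \<subseteq> C" by blast+
  obtain p q where pq: "quotient_of r = (p, q)" by (cases "quotient_of r")
  have q: "q > 0" and r: "r = of_int p / of_int q"
    using quotient_of_denom_pos[OF pq] quotient_of_div[OF pq] by simp_all
  define a b where "a = nat p" and "b = nat (- p)"
  show ?thesis
  proof (rule multisets_imp_tensorQ_zero)
    show "N * nat q > 0" using N q by simp
    show "set_mset (repeat_mset a X + repeat_mset b Y) \<subseteq> C"
      "set_mset (repeat_mset a Y + repeat_mset b X) \<subseteq> C"
      using XC set_mset_repeat_mset_subset[of a X] set_mset_repeat_mset_subset[of b X]
        set_mset_repeat_mset_subset[of a Y] set_mset_repeat_mset_subset[of b Y] by auto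
    show "cong (prod_mset (repeat_mset a X + repeat_mset b Y)) (prod_mset (repeat_mset a Y + repeat_mset b X))"
      by (simp add: prod_mset_repeat_mset cong_mult cong_power XY cong_sym)
  next
    fix g
    have ab: "(of_nat a - of_nat b :: rat) = of_int p" unfolding a_def b_def by simp
    have "of_nat (count (repeat_mset a X + repeat_mset b Y) g)
        - of_nat (count (repeat_mset a Y + repeat_mset b X) g)
        = (of_nat a - of_nat b) * (of_nat (count X g) - of_nat (count Y g) :: rat)"
      by (simp add: algebra_simps)
    also have "\<dots> = of_nat (N * nat q) * (r * w g)"
      unfolding ab count r using q by simp
    finally show "of_nat (count (repeat_mset a X + repeat_mset b Y) g)
        - of_nat (count (repeat_mset a Y + repeat_mset b X) g) = of_nat (N * nat q) * (r * w g)" .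
  qed
qed

lemma tensorQ_zero_sum:
  assumes I: "finite I" and w: "\<And>i. i \<in> I \<Longrightarrow> fin_supp (w i)"
    "\<And>i. i \<in> I \<Longrightarrow> {g. w i g \<noteq> 0} \<subseteq> C" "\<And>i. i \<in> I \<Longrightarrow> tensorQ_zero cong (w i)"
  shows "tensorQ_zero cong (\<lambda>g. \<Sum>i\<in>I. c i * w i g)"
  using assms
proof (induction I rule: finite_induct)
  case empty
  then show ?case using tensorQ_zero_zero by simp
next
  case (insert i I)
  have "tensorQ_zero cong (\<lambda>g. c i * w i g + (\<Sum>i\<in>I. c i * w i g))"
  proof (rule tensorQ_zero_add)
    show "fin_supp (\<lambda>g. c i * w i g)" "{g. c i * w i g \<noteq> 0} \<subseteq> C"
      using insert.prems unfolding fin_supp_def by (auto elim: finite_subset[rotated])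
    show "tensorQ_zero cong (\<lambda>g. c i * w i g)"
      using insert.prems by (intro tensorQ_zero_scale) auto
    show "fin_supp (\<lambda>g. \<Sum>i\<in>I. c i * w i g)"
      using insert by (intro fin_supp_sum) auto
    show "{g. (\<Sum>i\<in>I. c i * w i g) \<noteq> 0} \<subseteq> C"
      using support_sum_subset[of c w I] insert.prems by blast
    show "tensorQ_zero cong (\<lambda>g. \<Sum>i\<in>I. c i * w i g)"
      using insert by auto
  qed
  then show ?case using insert.hyps by simp
qed

end

interpretation equality: cancellative_congruence "(=) :: 'a::idom \<Rightarrow> 'a \<Rightarrow> bool" "{z. z \<noteq> 0}"
  by unfold_locales (auto simp: equivp_def)

lemma cancellative_congruence_mod:
  fixes p :: "'a::euclidean_ring_cancel"
  assumes p: "prime_elem p"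
  shows "cancellative_congruence (\<lambda>x y. x mod p = y mod p) {z. \<not> p dvd z}"
proof
  show "equivp (\<lambda>x y. x mod p = y mod p)" by (auto simp: equivp_def fun_eq_iff)
  fix x y z :: 'a
  show "x mod p = y mod p \<Longrightarrow> x * z mod p = y * z mod p" by (metis mod_mult_left_eq)
  show "x * z mod p = y * z mod p \<Longrightarrow> x mod p = y mod p" if "z \<in> {z. \<not> p dvd z}"
    using that p by (simp add: mod_eq_dvd_iff prime_elem_dvd_mult_iff flip: left_diff_distrib)
  show "1 \<in> {z. \<not> p dvd z}" using p by (simp add: prime_elem_not_unit)
  show "x \<in> {z. \<not> p dvd z} \<Longrightarrow> y \<in> {z. \<not> p dvd z} \<Longrightarrow> x * y \<in> {z. \<not> p dvd z}"
    using p by (simp add: prime_elem_dvd_mult_iff)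
qed

definition rat_linear :: "(('b \<Rightarrow> rat) \<Rightarrow> rat) \<Rightarrow> bool" where
  "rat_linear \<phi> \<longleftrightarrow> (\<forall>v w. \<phi> (\<lambda>x. v x + w x) = \<phi> v + \<phi> w) \<and> (\<forall>r v. \<phi> (\<lambda>x. r * v x) = r * \<phi> v)"

lemma rat_linear_add: "rat_linear \<phi> \<Longrightarrow> \<phi> (\<lambda>x. v x + w x) = \<phi> v + \<phi> w"
  by (simp add: rat_linear_def)

lemma rat_linear_scale: "rat_linear \<phi> \<Longrightarrow> \<phi> (\<lambda>x. r * v x) = r * \<phi> v"
  by (simp add: rat_linear_def)

lemma rat_linear_diff: "rat_linear \<phi> \<Longrightarrow> \<phi> (\<lambda>x. v x - w x) = \<phi> v - \<phi> w"
  using rat_linear_add[of \<phi> v "\<lambda>x. - 1 * w x"] rat_linear_scale[of \<phi> "- 1" w] by simp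

lemma rat_linear_sum:
  assumes "rat_linear \<phi>" and "finite I"
  shows "\<phi> (\<lambda>x. \<Sum>i\<in>I. u i * v i x) = (\<Sum>i\<in>I. u i * \<phi> (v i))"
  using assms(2)
proof (induction I rule: finite_induct)
  case empty
  show ?case using rat_linear_scale[OF assms(1), of 0 "\<lambda>_. 0"] by simp
next
  case (insert i I)
  then show ?case
    using rat_linear_add[OF assms(1), of "\<lambda>x. u i * v i x" "\<lambda>x. \<Sum>i\<in>I. u i * v i x"]
      rat_linear_scale[OF assms(1), of "u i" "v i"] by simp
qed

lemma qspan_separation:
  fixes S :: "('b \<Rightarrow> rat) set"
  assumes "x \<notin> qspan S"
  shows "\<exists>\<phi>. rat_linear \<phi> \<and> (\<forall>s\<in>S. \<phi> s = 0) \<and> \<phi> x = 1"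
proof -
  interpret V: vector_space "\<lambda>(r::rat) (v::'b \<Rightarrow> rat) x. r * v x"
    by unfold_locales (auto simp: fun_eq_iff algebra_simps)
  interpret Q: vector_space "(*) :: rat \<Rightarrow> rat \<Rightarrow> rat"
    by unfold_locales (auto simp: algebra_simps)
  interpret VQ: vector_space_pair "\<lambda>(r::rat) (v::'b \<Rightarrow> rat) x. r * v x" "(*) :: rat \<Rightarrow> rat \<Rightarrow> rat" ..
  have "V.span S \<subseteq> qspan S"
  proof
    fix y assume "y \<in> V.span S"
    then obtain T u where "finite T" "T \<subseteq> S" "y = (\<Sum>v\<in>T. (\<lambda>x. u v * v x))"
      unfolding V.span_explicit by blast
    moreover have "(\<Sum>v\<in>T. (\<lambda>x. u v * v x)) = (\<lambda>x. \<Sum>v\<in>T. u v * v x)"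
      by (rule ext) (induction T rule: infinite_finite_induct, simp_all)
    ultimately show "y \<in> qspan S" unfolding qspan_def by blast
  qed
  with assms have x: "x \<notin> V.span S" by blast
  obtain B where B: "B \<subseteq> V.span S" "V.independent B" "V.span S \<subseteq> V.span B"
    by (rule V.maximal_independent_subset)
  have xB: "x \<notin> V.span B" using x V.span_mono[OF B(1)] by (auto simp: V.span_span)
  obtain \<phi> where \<phi>: "Vector_Spaces.linear (\<lambda>r v x. r * v x) (*) \<phi>"
    and \<phi>_basis: "\<forall>v\<in>insert x B. \<phi> v = (if v = x then 1 else 0)"
    using VQ.linear_independent_extend[OF V.independent_insertI[OF xB B(2)], of "\<lambda>v. if v = x then 1 else 0"]
    by blast
  have "\<phi> s = 0" if "s \<in> S" for s
  proof (rule VQ.linear_eq_0_on_span[OF \<phi>])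
    show "\<And>v. v \<in> B \<Longrightarrow> \<phi> v = 0" using \<phi>_basis xB V.span_base by fastforce
    show "s \<in> V.span B" using that B(3) V.span_base by blast
  qed
  moreover have "rat_linear \<phi>"
    unfolding rat_linear_def
    using VQ.linear_add[OF \<phi>] VQ.linear_scale[OF \<phi>] by (simp add: plus_fun_def)
  ultimately show ?thesis using \<phi>_basis by auto
qed

section \<open>Additive functions on polynomials of small degree\<close>

lemma sum_mset_eq_of_small_product:
  fixes g :: "'a::field poly \<Rightarrow> 'b::cancel_comm_monoid_add"
  assumes d: "0 < degree P"
    and g: "\<And>a b. a \<in> units_rep P \<Longrightarrow> b \<in> units_rep P \<Longrightarrow> degree a + degree b < degree P \<Longrightarrow>
      g (a * b) = g a + g b"
  shows "set_mset X \<subseteq> units_rep P \<Longrightarrow> degree (prod_mset X) < degree P \<Longrightarrow> (\<Sum>x\<in>#X. g x) = g (prod_mset X)"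
proof (induction X)
  case empty
  have "g (1 * 1) = g 1 + g 1" using g[of 1 1] d by (simp add: units_rep_def)
  then show ?case by simp
next
  case (add x X)
  have x: "x \<in> units_rep P" and X: "set_mset X \<subseteq> units_rep P" using add.prems(1) by auto
  have "prod_mset X \<noteq> 0" using X by (auto simp: units_rep_def prod_mset_zero_iff)
  then have deg: "degree (x * prod_mset X) = degree x + degree (prod_mset X)"
    using x by (simp add: degree_mult_eq units_rep_def)
  with add.prems(2) \<open>prod_mset X \<noteq> 0\<close> have "prod_mset X \<in> units_rep P"
    by (simp add: units_rep_def)
  then show ?case using add.IH[OF X] add.prems(2) deg g[OF x] by simp
qed

text \<open>Polynomials over an arbitrary field are not a \<open>factorial_semiring\<close> instance, so
  \<open>prime_divisor_exists\<close> does not apply.\<close>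

lemma prime_factor_exists:
  fixes p :: "'a::field poly"
  assumes "0 < degree p"
  obtains q where "prime_elem q" "q dvd p"
  using assms
proof (induction "degree p" arbitrary: p thesis rule: less_induct)
  case less
  show ?case
  proof (cases "irreducible p")
    case True
    then show ?thesis by (rule less.prems(1)[OF field_poly_irreducible_imp_prime dvd_refl])
  next
    case False
    have "p \<noteq> 0" using less.prems(2) by auto
    then have "\<not> is_unit p" using less.prems(2) by (simp add: is_unit_iff_degree)
    with False \<open>p \<noteq> 0\<close> obtain a b where ab: "p = a * b" "\<not> is_unit a" "\<not> is_unit b"
      unfolding irreducible_def by blast
    then have "a \<noteq> 0" "b \<noteq> 0" using \<open>p \<noteq> 0\<close> by auto
    then have "0 < degree a" "0 < degree b" using ab by (auto simp: is_unit_iff_degree)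
    then have "degree a < degree p" using ab \<open>a \<noteq> 0\<close> \<open>b \<noteq> 0\<close> by (simp add: degree_mult_eq)
    then obtain q where q: "prime_elem q" "q dvd a"
      using less.hyps[OF \<open>degree a < degree p\<close> _ \<open>0 < degree a\<close>] by blast
    have "q dvd p" using q(2) ab(1) by simp
    then show ?thesis by (rule less.prems(1)[OF q(1)])
  qed
qed

lemma units_rep_mult_factors:
  assumes "q * x \<in> units_rep P"
  shows "q \<in> units_rep P" "x \<in> units_rep P" "degree q + degree x < degree P"
proof -
  have "q \<noteq> 0" "x \<noteq> 0" using assms by (auto simp: units_rep_def)
  then show "degree q + degree x < degree P" using assms by (simp add: units_rep_def degree_mult_eq)
  then show "q \<in> units_rep P" "x \<in> units_rep P" using \<open>q \<noteq> 0\<close> \<open>x \<noteq> 0\<close> by (auto simp: units_rep_def)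
qed

lemma prime_elem_dvd_prod_mset_split:
  fixes q :: "'a::algebraic_semidom"
  assumes "prime_elem q" and "q dvd prod_mset Z"
  obtains z Z0 where "Z = add_mset (q * z) Z0"
proof -
  obtain a where a: "a \<in># Z" "q dvd a" using prime_elem_dvd_prod_msetE[OF assms] by blast
  obtain z where "a = q * z" using a(2) by (rule dvdE)
  moreover obtain Z0 where "Z = add_mset a Z0" using multi_member_split[OF a(1)] by blast
  ultimately show ?thesis using that by blast
qed

lemma sum_mset_eq_if_prod_mset_eq:
  fixes g :: "'a::field poly \<Rightarrow> 'b::cancel_comm_monoid_add"
  assumes d: "0 < degree P"
    and g: "\<And>a b. a \<in> units_rep P \<Longrightarrow> b \<in> units_rep P \<Longrightarrow> degree a + degree b < degree P \<Longrightarrow>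
      g (a * b) = g a + g b"
  shows "set_mset X \<subseteq> units_rep P \<Longrightarrow> set_mset Y \<subseteq> units_rep P \<Longrightarrow> prod_mset X = prod_mset Y \<Longrightarrow>
    (\<Sum>x\<in>#X. g x) = (\<Sum>y\<in>#Y. g y)"
proof (induction "degree (prod_mset X)" arbitrary: X Y rule: less_induct)
  case less
  show ?case
  proof (cases "degree (prod_mset X) < degree P")
    case True
    then show ?thesis
      using less.prems sum_mset_eq_of_small_product[OF d g] by metis
  next
    case False
    have "prod_mset X \<noteq> 0" using less.prems(1) by (auto simp: units_rep_def prod_mset_zero_iff)
    have "0 < degree (prod_mset X)" using False d by simp
    then obtain q where q: "prime_elem q" "q dvd prod_mset X"
      using prime_factor_exists by blast
    obtain x X0 where x: "X = add_mset (q * x) X0"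
      by (rule prime_elem_dvd_prod_mset_split[OF q])
    have "q dvd prod_mset Y" using q(2) less.prems(3) by simp
    then obtain y Y0 where y: "Y = add_mset (q * y) Y0"
      by (rule prime_elem_dvd_prod_mset_split[OF q(1)])
    have "q \<noteq> 0" using q(1) by auto
    then have "0 < degree q" using prime_elem_not_unit[OF q(1)] by (simp add: is_unit_iff_degree)
    note x_factors = units_rep_mult_factors[of q x P] and y_factors = units_rep_mult_factors[of q y P]
    have X0: "set_mset (add_mset x X0) \<subseteq> units_rep P" and Y0: "set_mset (add_mset y Y0) \<subseteq> units_rep P"
      using less.prems(1,2) x_factors y_factors unfolding x y by auto
    have eq: "prod_mset (add_mset x X0) = prod_mset (add_mset y Y0)"
      using less.prems(3) \<open>q \<noteq> 0\<close> by (simp add: x y mult.assoc)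
    have deg: "degree (prod_mset (add_mset x X0)) < degree (prod_mset X)"
      using \<open>prod_mset X \<noteq> 0\<close> \<open>0 < degree q\<close> by (auto simp: x degree_mult_eq)
    have "(\<Sum>z\<in>#add_mset x X0. g z) = (\<Sum>z\<in>#add_mset y Y0. g z)"
      by (rule less.hyps[OF deg X0 Y0 eq])
    moreover have "g (q * x) = g q + g x" "g (q * y) = g q + g y"
      using less.prems(1,2) x_factors y_factors g unfolding x y by auto
    ultimately show ?thesis unfolding x y by (simp add: add.assoc)
  qed
qed

definition residue_units :: "'a::field poly \<Rightarrow> 'a poly monoid" where
  "residue_units P = \<lparr>carrier = units_rep P, mult = (\<lambda>a b. a * b mod P), one = 1\<rparr>"

lemma residue_units_simps [simp]:
  "carrier (residue_units P) = units_rep P"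
  "a \<otimes>\<^bsub>residue_units P\<^esub> b = a * b mod P"
  "\<one>\<^bsub>residue_units P\<^esub> = 1"
  by (simp_all add: residue_units_def)

locale irreducible_modulus =
  fixes P :: "'a::field poly"
  assumes irreducible: "irreducible P"
begin

lemma prime_elem: "prime_elem P"
  using irreducible by (rule field_poly_irreducible_imp_prime)

lemma degree_pos: "0 < degree P"
proof -
  have "P \<noteq> 0" using prime_elem by auto
  moreover have "\<not> is_unit P" using irreducible by (rule irreducible_not_unit)
  ultimately show ?thesis using is_unit_iff_degree by blast
qed

lemma one_in_units_rep: "1 \<in> units_rep P"
  using degree_pos by (simp add: units_rep_def)

lemma mod_units_rep: "a \<in> units_rep P \<Longrightarrow> a mod P = a"
  by (simp add: units_rep_def mod_poly_less)

lemma units_rep_not_dvd: "a \<in> units_rep P \<Longrightarrow> \<not> P dvd a"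
  using dvd_imp_degree_le[of P a] by (auto simp: units_rep_def)

lemma mod_in_units_rep:
  assumes "\<not> P dvd a"
  shows "a mod P \<in> units_rep P"
proof -
  have "P \<noteq> 0" "a mod P \<noteq> 0" using degree_pos assms by (auto simp: mod_eq_0_iff_dvd)
  then show ?thesis by (simp add: units_rep_def degree_mod_less')
qed

lemma mult_mod_in_units_rep:
  assumes "a \<in> units_rep P" and "b \<in> units_rep P"
  shows "a * b mod P \<in> units_rep P"
proof (rule mod_in_units_rep)
  show "\<not> P dvd a * b"
    using prime_elem units_rep_not_dvd[OF assms(1)] units_rep_not_dvd[OF assms(2)]
    by (simp add: prime_elem_dvd_mult_iff)
qed

lemma degree_eq_0_if_dvd:
  assumes "a \<in> units_rep P" and "a dvd P"
  shows "degree a = 0"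
proof -
  obtain q where q: "P = a * q" using assms(2) by (rule dvdE)
  have "\<not> is_unit q"
  proof
    assume "is_unit q"
    then have "q \<noteq> 0" by auto
    with \<open>is_unit q\<close> have "degree q = 0" using is_unit_iff_degree by blast
    with \<open>q \<noteq> 0\<close> have "degree P = degree a" using q assms(1) by (simp add: degree_mult_eq units_rep_def)
    then show False using assms(1) by (simp add: units_rep_def)
  qed
  then have "is_unit a" using irreducibleD[OF irreducible q] by blast
  then show ?thesis using assms(1) by (simp add: is_unit_iff_degree units_rep_def)
qed

text \<open>Polynomials over an arbitrary field have no \<open>gcd\<close> instance, so Bezout's identity is
  obtained directly by induction along Euclid's algorithm.\<close>

lemma inverse_mod:
  assumes "a \<in> units_rep P"
  obtains u where "u * a mod P = 1"
  using assms
proof (induction "degree a" arbitrary: a thesis rule: less_induct)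
  case less
  show ?case
  proof (cases "degree a = 0")
    case True
    then have "is_unit a" using less.prems by (simp add: units_rep_def is_unit_iff_degree)
    then obtain u where "1 = a * u" by (auto elim: dvdE)
    then have "u * a mod P = 1" using degree_pos by (simp add: mod_poly_less mult.commute)
    then show ?thesis by (rule less.prems(1))
  next
    case False
    define q r where "q = P div a" and "r = P mod a"
    have P: "P = q * a + r" by (simp add: q_def r_def)
    have "r \<noteq> 0"
    proof
      assume "r = 0"
      then have "a dvd P" using P by simp
      then show False using False less.prems(2) by (simp add: degree_eq_0_if_dvd)
    qed
    have "degree r < degree a"
      using degree_mod_less'[of a P] \<open>r \<noteq> 0\<close> less.prems(2) unfolding r_def units_rep_def by auto
    moreover have "r \<in> units_rep P"
      using \<open>r \<noteq> 0\<close> \<open>degree r < degree a\<close> less.prems(2) by (simp add: units_rep_def)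
    ultimately obtain u where u: "u * r mod P = 1" using less.hyps by blast
    have "(- u * q) * a = u * r + (- u) * P" using P by (simp add: algebra_simps)
    then have "(- u * q) * a mod P = 1" using u by (metis mod_mult_self1)
    then show ?thesis by (rule less.prems(1))
  qed
qed

lemma comm_group_residue_units: "comm_group (residue_units P)"
proof (rule comm_groupI, unfold residue_units_simps)
  fix a b c :: "'a poly"
  show "a \<in> units_rep P \<Longrightarrow> b \<in> units_rep P \<Longrightarrow> a * b mod P \<in> units_rep P"
    by (rule mult_mod_in_units_rep)
  show "a * b mod P * c mod P = a * (b * c mod P) mod P"
    by (simp add: mod_mult_left_eq mod_mult_right_eq mult.assoc)
  show "a * b mod P = b * a mod P" by (simp add: mult.commute)
  show "a \<in> units_rep P \<Longrightarrow> 1 * a mod P = a" by (simp add: mod_units_rep)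
  show "1 \<in> units_rep P" by (rule one_in_units_rep)
  assume a: "a \<in> units_rep P"
  then obtain u where u: "u * a mod P = 1" by (rule inverse_mod)
  then have "u mod P * a mod P = 1" by (simp add: mod_mult_left_eq)
  moreover have "\<not> P dvd u" using u degree_pos by (auto simp: mod_eq_0_iff_dvd[symmetric])
  ultimately show "\<exists>b\<in>units_rep P. b * a mod P = 1" using mod_in_units_rep by blast
qed

sublocale mod: cancellative_congruence "\<lambda>x y. x mod P = y mod P" "{z. \<not> P dvd z}"
  using prime_elem by (rule cancellative_congruence_mod)

end

lemma Phi_eq_sum:
  assumes "finite T" and "{p. c p \<noteq> 0} \<subseteq> T"
  shows "Phi P c f = (\<Sum>p\<in>T. c p * yimg P (fst p) (snd p) f)"
  unfolding Phi_def by (rule sum.mono_neutral_left) (use assms in auto)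

lemma Phi_linear:
  assumes "fin_supp c" and "fin_supp d"
  shows "Phi P (\<lambda>q. r * c q + s * d q) f = r * Phi P c f + s * Phi P d f"
proof -
  define T where "T = {q. c q \<noteq> 0} \<union> {q. d q \<noteq> 0}"
  have T: "finite T" using assms unfolding T_def fin_supp_def by auto
  have "Phi P (\<lambda>q. r * c q + s * d q) f = (\<Sum>p\<in>T. (r * c p + s * d p) * yimg P (fst p) (snd p) f)"
    by (rule Phi_eq_sum[OF T]) (auto simp: T_def)
  also have "\<dots> = r * (\<Sum>p\<in>T. c p * yimg P (fst p) (snd p) f) + s * (\<Sum>p\<in>T. d p * yimg P (fst p) (snd p) f)"
    by (simp add: sum.distrib sum_distrib_left algebra_simps)
  also have "\<dots> = r * Phi P c f + s * Phi P d f"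
    by (subst (1 2) Phi_eq_sum[OF T]) (auto simp: T_def)
  finally show ?thesis .
qed

lemma Phi_add: "fin_supp c \<Longrightarrow> fin_supp d \<Longrightarrow> Phi P (\<lambda>q. c q + d q) f = Phi P c f + Phi P d f"
  using Phi_linear[of c d P 1 1 f] by simp

lemma Phi_diff: "fin_supp c \<Longrightarrow> fin_supp d \<Longrightarrow> Phi P (\<lambda>q. c q - d q) f = Phi P c f - Phi P d f"
  using Phi_linear[of c d P 1 "- 1" f] by simp

lemma Phi_ygen: "Phi P (ygen a b) f = yimg P a b f"
  by (subst Phi_eq_sum[of "{(a, b)}"]) (auto simp: ygen_def)

lemma Phi_sum:
  assumes I: "finite I" and c: "\<And>i. i \<in> I \<Longrightarrow> fin_supp (c i)"
  shows "Phi P (\<lambda>q. \<Sum>i\<in>I. u i * c i q) f = (\<Sum>i\<in>I. u i * Phi P (c i) f)"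
proof -
  define T where "T = (\<Union>i\<in>I. {q. c i q \<noteq> 0})"
  have T: "finite T" using I c unfolding T_def fin_supp_def by auto
  have "Phi P (\<lambda>q. \<Sum>i\<in>I. u i * c i q) f = (\<Sum>p\<in>T. (\<Sum>i\<in>I. u i * c i p) * yimg P (fst p) (snd p) f)"
    using support_sum_subset[of u c I] by (intro Phi_eq_sum T) (simp add: T_def)
  also have "\<dots> = (\<Sum>i\<in>I. u i * (\<Sum>p\<in>T. c i p * yimg P (fst p) (snd p) f))"
    by (simp add: sum_distrib_right sum_distrib_left mult.assoc) (rule sum.swap)
  also have "\<dots> = (\<Sum>i\<in>I. u i * Phi P (c i) f)"
    by (intro sum.cong refl arg_cong[where f = "(*) _"] Phi_eq_sum[symmetric] T) (auto simp: T_def)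
  finally show ?thesis .
qed

lemma Phi_support: "{f. Phi P c f \<noteq> 0} \<subseteq> (\<Union>p\<in>{p. c p \<noteq> 0}. {fst p, snd p, fst p * snd p mod P})"
proof
  fix f assume "f \<in> {f. Phi P c f \<noteq> 0}"
  then obtain p where "c p \<noteq> 0" "yimg P (fst p) (snd p) f \<noteq> 0"
    using support_sum_subset[of c "\<lambda>p. yimg P (fst p) (snd p)" "{p. c p \<noteq> 0}"] unfolding Phi_def by blast
  then show "f \<in> (\<Union>p\<in>{p. c p \<noteq> 0}. {fst p, snd p, fst p * snd p mod P})"
    using yimg_support by blast
qed

lemma fin_supp_expansion:
  assumes "fin_supp c"
  shows "c = (\<lambda>q. \<Sum>p\<in>{p. c p \<noteq> 0}. c p * ygen (fst p) (snd p) q)"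
proof
  fix q
  have "(\<Sum>p\<in>{p. c p \<noteq> 0}. c p * ygen (fst p) (snd p) q) = (\<Sum>p\<in>{p. c p \<noteq> 0}. if p = q then c p else 0)"
    by (rule sum.cong) (auto simp: ygen_def)
  also have "\<dots> = c q" using assms by (simp add: fin_supp_def)
  finally show "c q = (\<Sum>p\<in>{p. c p \<noteq> 0}. c p * ygen (fst p) (snd p) q)" by simp
qed

lemma Phi_pairing:
  assumes c: "fin_supp c" and S: "finite S"
    and sub: "\<And>p. c p \<noteq> 0 \<Longrightarrow> {fst p, snd p, fst p * snd p mod P} \<subseteq> S"
  shows "(\<Sum>x\<in>S. Phi P c x * g x) = (\<Sum>p\<in>{p. c p \<noteq> 0}. c p * (g (fst p) + g (snd p) - g (fst p * snd p mod P)))"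
proof -
  have yimg_pairing: "(\<Sum>x\<in>S. yimg P a b x * g x) = g a + g b - g (a * b mod P)"
    if "{a, b, a * b mod P} \<subseteq> S" for a b
  proof -
    have "(\<Sum>x\<in>S. yimg P a b x * g x)
        = (\<Sum>x\<in>S. (if x = a then g x else 0) + (if x = b then g x else 0) - (if x = a * b mod P then g x else 0))"
      by (rule sum.cong) (auto simp: yimg_def algebra_simps)
    also have "\<dots> = g a + g b - g (a * b mod P)"
      using S that by (simp add: sum.distrib sum_subtractf sum.delta)
    finally show ?thesis .
  qed
  have "(\<Sum>x\<in>S. Phi P c x * g x) = (\<Sum>p\<in>{p. c p \<noteq> 0}. c p * (\<Sum>x\<in>S. yimg P (fst p) (snd p) x * g x))"
    unfolding Phi_def by (simp add: sum_distrib_right sum_distrib_left mult.assoc) (rule sum.swap)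
  also have "\<dots> = (\<Sum>p\<in>{p. c p \<noteq> 0}. c p * (g (fst p) + g (snd p) - g (fst p * snd p mod P)))"
    using sub yimg_pairing by (intro sum.cong) auto
  finally show ?thesis .
qed

lemma freeY_linear:
  assumes "c \<in> freeY P" and "d \<in> freeY P"
  shows "(\<lambda>q. r * c q + s * d q) \<in> freeY P"
proof -
  have "{q. r * c q + s * d q \<noteq> 0} \<subseteq> {q. c q \<noteq> 0} \<union> {q. d q \<noteq> 0}" by auto
  then show ?thesis using assms unfolding freeY_def by (simp add: fin_supp_linear) blast
qed

lemma freeY_add: "c \<in> freeY P \<Longrightarrow> d \<in> freeY P \<Longrightarrow> (\<lambda>q. c q + d q) \<in> freeY P"
  using freeY_linear[of c P d 1 1] by simp

lemma freeY_diff: "c \<in> freeY P \<Longrightarrow> d \<in> freeY P \<Longrightarrow> (\<lambda>q. c q - d q) \<in> freeY P"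
  using freeY_linear[of c P d 1 "- 1"] by simp

primrec telescope :: "'a::field poly \<Rightarrow> 'a poly \<Rightarrow> 'a poly list \<Rightarrow> ('a poly \<times> 'a poly \<Rightarrow> rat)" where
  "telescope P p [] = (\<lambda>q. 0)"
| "telescope P p (x # xs) = (\<lambda>q. ygen p x q + telescope P (p * x mod P) xs q)"

lemma fin_supp_telescope: "fin_supp (telescope P p xs)"
  by (induction xs arbitrary: p) (simp_all add: fin_supp_def[of "\<lambda>q. 0"] fin_supp_add fin_supp_ygen)

section \<open>The kernel of reduction modulo \<open>P\<close>\<close>

context irreducible_modulus
begin

lemma telescope_in_freeY:
  "p \<in> units_rep P \<Longrightarrow> set xs \<subseteq> units_rep P \<Longrightarrow> telescope P p xs \<in> freeY P"
proof (induction xs arbitrary: p)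
  case Nil
  then show ?case by (simp add: freeY_def fin_supp_def)
next
  case (Cons x xs)
  then have "telescope P (p * x mod P) xs \<in> freeY P" by (simp add: mult_mod_in_units_rep)
  then show ?case
    using Cons.prems fin_supp_telescope[of P p "x # xs"]
    by (auto simp: freeY_def ygen_def split: if_splits)
qed

lemma Phi_telescope:
  "p \<in> units_rep P \<Longrightarrow> set xs \<subseteq> units_rep P \<Longrightarrow> Phi P (telescope P p xs) f
     = (if f = p then 1 else 0) + of_nat (count (mset xs) f) - (if f = p * prod_list xs mod P then 1 else 0)"
proof (induction xs arbitrary: p)
  case Nil
  then show ?case by (simp add: Phi_def mod_units_rep)
next
  case (Cons x xs)
  have "Phi P (telescope P p (x # xs)) f = yimg P p x f + Phi P (telescope P (p * x mod P) xs) f"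
    by (simp add: Phi_add fin_supp_ygen fin_supp_telescope Phi_ygen)
  moreover have "p * x mod P * prod_list xs mod P = p * prod_list (x # xs) mod P"
    by (simp add: mod_mult_left_eq mult.assoc)
  ultimately show ?case
    using Cons.IH[of "p * x mod P"] Cons.prems by (simp add: yimg_def mult_mod_in_units_rep)
qed

lemma Phi_in_Vspace:
  assumes "c \<in> freeY P"
  shows "Phi P c \<in> Vspace P"
proof -
  have c: "fin_supp c" "{p. c p \<noteq> 0} \<subseteq> units_rep P \<times> units_rep P"
    using assms by (auto simp: freeY_def)
  have "fin_supp (Phi P c)"
    unfolding Phi_def using c(1) fin_supp_yimg by (intro fin_supp_sum) (simp_all add: fin_supp_def)
  moreover have "{f. Phi P c f \<noteq> 0} \<subseteq> units_rep P"
  proof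
    fix f assume "f \<in> {f. Phi P c f \<noteq> 0}"
    then obtain p where p: "c p \<noteq> 0" "f \<in> {fst p, snd p, fst p * snd p mod P}"
      using Phi_support[of P c] by blast
    then have "fst p \<in> units_rep P" "snd p \<in> units_rep P" using c(2) by auto
    then show "f \<in> units_rep P" using p(2) mult_mod_in_units_rep by auto
  qed
  ultimately show ?thesis by (simp add: Vspace_def)
qed

lemma sP_zero_yimg:
  assumes "a \<in> units_rep P" and "b \<in> units_rep P"
  shows "sP_zero P (yimg P a b)"
  unfolding sP_zero_def yimg_def
  using assms mult_mod_in_units_rep[OF assms] units_rep_not_dvd
  by (intro mod.tensorQ_zero_mult_relation) simp_all

lemma sP_zero_Phi:
  assumes "c \<in> freeY P"
  shows "sP_zero P (Phi P c)"
proof -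
  have fin: "finite {p. c p \<noteq> 0}"
    and units: "\<And>p. c p \<noteq> 0 \<Longrightarrow> fst p \<in> units_rep P \<and> snd p \<in> units_rep P"
    using assms by (auto simp: freeY_def fin_supp_def)
  have C: "{f. yimg P (fst p) (snd p) f \<noteq> 0} \<subseteq> {z. \<not> P dvd z}" if "c p \<noteq> 0" for p
    using yimg_support[of P "fst p" "snd p"] units[OF that] mult_mod_in_units_rep[of "fst p" "snd p"]
      units_rep_not_dvd by blast
  have "tensorQ_zero (\<lambda>x y. x mod P = y mod P) (\<lambda>f. \<Sum>p\<in>{p. c p \<noteq> 0}. c p * yimg P (fst p) (snd p) f)"
    using fin fin_supp_yimg C sP_zero_yimg[unfolded sP_zero_def] units by (intro mod.tensorQ_zero_sum) auto
  then show ?thesis by (simp add: sP_zero_def Phi_def)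
qed

lemma rels_subset_freeY: "rels P \<subseteq> freeY P"
proof
  fix r assume "r \<in> rels P"
  have ygen: "ygen a b \<in> freeY P" if "a \<in> units_rep P" "b \<in> units_rep P" for a b
    using that fin_supp_ygen by (auto simp: freeY_def ygen_def split: if_splits)
  from \<open>r \<in> rels P\<close> show "r \<in> freeY P"
    unfolding rels_def using mult_mod_in_units_rep
    by (elim UnE CollectE exE conjE) (simp_all add: ygen freeY_add freeY_diff)
qed

lemma zero_FtQ_Phi_rels:
  assumes "r \<in> rels P"
  shows "zero_FtQ (Phi P r)"
proof -
  from assms show ?thesis
    unfolding rels_def
  proof (elim UnE CollectE exE conjE)
    fix a b assume r: "r = ygen a b" and ab: "a \<in> units_rep P" "b \<in> units_rep P"
      and small: "degree a + degree b < degree P"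
    then have "a * b mod P = a * b" by (simp add: units_rep_def mod_poly_less degree_mult_eq)
    then have "Phi P r = (\<lambda>f. (if f = a then 1 else 0) + (if f = b then 1 else 0) - (if f = a * b then 1 else 0))"
      by (simp add: r fun_eq_iff Phi_ygen yimg_def)
    then show ?thesis
      unfolding zero_FtQ_def using ab by (simp add: equality.tensorQ_zero_mult_relation units_rep_def)
  next
    fix a b assume r: "r = (\<lambda>q. ygen a b q - ygen b a q)"
    have "Phi P r = (\<lambda>f. 0)" unfolding r
      by (simp add: fun_eq_iff Phi_diff fin_supp_ygen Phi_ygen yimg_def mult.commute)
    then show ?thesis unfolding zero_FtQ_def by (simp add: equality.tensorQ_zero_zero)
  next
    fix a b c
    assume r: "r = (\<lambda>q. ygen a b q + ygen (a * b mod P) c q - ygen a c q - ygen (a * c mod P) b q)"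
    have "a * b mod P * c mod P = a * c mod P * b mod P"
      unfolding mod_mult_left_eq by (simp add: ac_simps)
    then have "Phi P r = (\<lambda>f. 0)" unfolding r
      by (simp add: fun_eq_iff Phi_diff Phi_add fin_supp_ygen fin_supp_add fin_supp_diff Phi_ygen yimg_def)
    then show ?thesis unfolding zero_FtQ_def by (simp add: equality.tensorQ_zero_zero)
  qed
qed

lemma zero_FtQ_Phi_if_in_qspan:
  assumes "c \<in> qspan (rels P)"
  shows "zero_FtQ (Phi P c)"
proof -
  obtain T u where T: "finite T" "T \<subseteq> rels P" and c: "c = (\<lambda>p. \<Sum>r\<in>T. u r * r p)"
    using assms unfolding qspan_def by blast
  have r: "r \<in> freeY P" "Phi P r \<in> Vspace P" "zero_FtQ (Phi P r)" if "r \<in> T" for r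
    using that T(2) rels_subset_freeY Phi_in_Vspace zero_FtQ_Phi_rels by blast+
  have "Phi P c = (\<lambda>f. \<Sum>r\<in>T. u r * Phi P r f)"
    unfolding c using r(1) T(1) by (intro ext Phi_sum) (auto simp: freeY_def)
  moreover have "tensorQ_zero (=) (\<lambda>f. \<Sum>r\<in>T. u r * Phi P r f)"
    using T(1) r(2,3) by (intro equality.tensorQ_zero_sum) (auto simp: Vspace_def units_rep_def zero_FtQ_def)
  ultimately show ?thesis by (simp add: zero_FtQ_def)
qed

lemma rels_annihilator_small:
  assumes "\<forall>r\<in>rels P. \<phi> r = 0"
    and "a \<in> units_rep P" "b \<in> units_rep P" "degree a + degree b < degree P"
  shows "\<phi> (ygen a b) = 0"
proof -
  have "ygen a b \<in> rels P" unfolding rels_def using assms(2-) by blast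
  then show ?thesis using assms(1) by blast
qed

lemma rels_annihilator_sym:
  assumes \<phi>: "rat_linear \<phi>" and rels: "\<forall>r\<in>rels P. \<phi> r = 0"
    and "a \<in> units_rep P" "b \<in> units_rep P"
  shows "\<phi> (ygen a b) = \<phi> (ygen b a)"
proof -
  have "(\<lambda>q. ygen a b q - ygen b a q) \<in> rels P" unfolding rels_def using assms(3,4) by blast
  then have "\<phi> (\<lambda>q. ygen a b q - ygen b a q) = 0" using rels by blast
  then show ?thesis unfolding rat_linear_diff[OF \<phi>] by simp
qed

lemma rels_annihilator_cocycle:
  assumes \<phi>: "rat_linear \<phi>" and rels: "\<forall>r\<in>rels P. \<phi> r = 0"
    and abc: "a \<in> units_rep P" "b \<in> units_rep P" "c \<in> units_rep P"
  shows "\<phi> (ygen a b) + \<phi> (ygen (a * b mod P) c) = \<phi> (ygen b c) + \<phi> (ygen a (b * c mod P))"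
proof -
  have "(\<lambda>q. ygen b c q + ygen (b * c mod P) a q - ygen b a q - ygen (b * a mod P) c q) \<in> rels P"
    unfolding rels_def using abc by blast
  then have "\<phi> (\<lambda>q. ygen b c q + ygen (b * c mod P) a q - ygen b a q - ygen (b * a mod P) c q) = 0"
    using rels by blast
  moreover have "\<phi> (ygen (b * c mod P) a) = \<phi> (ygen a (b * c mod P))"
    using abc mult_mod_in_units_rep by (intro rels_annihilator_sym[OF \<phi> rels]) auto
  moreover have "\<phi> (ygen b a) = \<phi> (ygen a b)" using abc by (intro rels_annihilator_sym[OF \<phi> rels])
  ultimately show ?thesis
    unfolding rat_linear_diff[OF \<phi>] rat_linear_add[OF \<phi>] by (simp add: mult.commute)
qed

lemma coboundary_of_rels_annihilator:
  assumes \<phi>: "rat_linear \<phi>" and rels: "\<forall>r\<in>rels P. \<phi> r = 0"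
  shows "\<exists>g. (\<forall>a\<in>units_rep P. \<forall>b\<in>units_rep P. \<phi> (ygen a b) = g a + g b - g (a * b mod P))
    \<and> (\<forall>a\<in>units_rep P. \<forall>b\<in>units_rep P. degree a + degree b < degree P \<longrightarrow> g (a * b) = g a + g b)"
proof -
  interpret R: comm_group "residue_units P" by (rule comm_group_residue_units)
  have "\<exists>g. \<forall>a\<in>carrier (residue_units P). \<forall>b\<in>carrier (residue_units P).
      \<phi> (ygen a b) = g a + g b - g (a \<otimes>\<^bsub>residue_units P\<^esub> b)"
  proof (rule R.symmetric_cocycle_is_coboundary, unfold residue_units_simps)
    show "\<phi> (ygen a b) = \<phi> (ygen b a)" if "a \<in> units_rep P" "b \<in> units_rep P" for a b
      using that by (rule rels_annihilator_sym[OF \<phi> rels])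
    show "\<phi> (ygen a b) + \<phi> (ygen (a * b mod P) c) = \<phi> (ygen b c) + \<phi> (ygen a (b * c mod P))"
      if "a \<in> units_rep P" "b \<in> units_rep P" "c \<in> units_rep P" for a b c
      using that by (rule rels_annihilator_cocycle[OF \<phi> rels])
    show "\<phi> (ygen 1 a) = 0" if "a \<in> units_rep P" for a
      using that one_in_units_rep by (intro rels_annihilator_small[OF rels]) (simp_all add: units_rep_def)
  qed
  then obtain g where g: "\<And>a b. a \<in> units_rep P \<Longrightarrow> b \<in> units_rep P \<Longrightarrow>
      \<phi> (ygen a b) = g a + g b - g (a * b mod P)"
    by auto
  have "g (a * b) = g a + g b"
    if "a \<in> units_rep P" "b \<in> units_rep P" "degree a + degree b < degree P" for a b
  proof -
    have "a * b mod P = a * b" using that by (simp add: units_rep_def mod_poly_less degree_mult_eq)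
    then show ?thesis using g[of a b] rels_annihilator_small[OF rels that] that by simp
  qed
  then show ?thesis using g by blast
qed

lemma zero_FtQ_annihilated:
  fixes g :: "'a poly \<Rightarrow> rat"
  assumes g: "\<And>a b. a \<in> units_rep P \<Longrightarrow> b \<in> units_rep P \<Longrightarrow> degree a + degree b < degree P \<Longrightarrow>
      g (a * b) = g a + g b"
    and w: "w \<in> Vspace P" "zero_FtQ w" and S: "finite S" "{f. w f \<noteq> 0} \<subseteq> S"
  shows "(\<Sum>x\<in>S. w x * g x) = 0"
proof -
  have supp: "fin_supp w" "{f. w f \<noteq> 0} \<subseteq> units_rep P" using w(1) by (auto simp: Vspace_def)
  obtain N :: nat and X Y where N: "N > 0" and XY: "set_mset X \<subseteq> {f. w f \<noteq> 0}" "set_mset Y \<subseteq> {f. w f \<noteq> 0}"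
    and count: "\<And>f. of_nat (count X f) - of_nat (count Y f) = of_nat N * w f"
    and prod: "prod_mset X = prod_mset Y"
    by (rule tensorQ_zero_multisets[OF supp(1) w(2)[unfolded zero_FtQ_def]], rule that)
  have XS: "set_mset X \<subseteq> S" "set_mset Y \<subseteq> S" using XY S(2) by auto
  have "(\<Sum>x\<in>#X. g x) = (\<Sum>y\<in>#Y. g y)"
  proof (rule sum_mset_eq_if_prod_mset_eq[where g = g, OF degree_pos])
    show "g (a * b) = g a + g b"
      if "a \<in> units_rep P" "b \<in> units_rep P" "degree a + degree b < degree P" for a b
      using that by (rule g)
    show "set_mset X \<subseteq> units_rep P" "set_mset Y \<subseteq> units_rep P" using XY supp(2) by auto
    show "prod_mset X = prod_mset Y" by (rule prod)
  qed
  then have "(\<Sum>x\<in>S. (of_nat (count X x) - of_nat (count Y x)) * g x) = 0"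
    by (simp add: sum_mset_eq_sum_count[OF S(1) XS(1)] sum_mset_eq_sum_count[OF S(1) XS(2)]
        left_diff_distrib sum_subtractf)
  then have "of_nat N * (\<Sum>x\<in>S. w x * g x) = 0"
    unfolding count by (simp add: sum_distrib_left mult.assoc)
  then show ?thesis using N by simp
qed

lemma in_qspan_if_zero_FtQ_Phi:
  assumes c: "c \<in> freeY P" and zero: "zero_FtQ (Phi P c)"
  shows "c \<in> qspan (rels P)"
proof (rule ccontr)
  assume "c \<notin> qspan (rels P)"
  then obtain \<phi> where \<phi>: "rat_linear \<phi>" "\<forall>r\<in>rels P. \<phi> r = 0" and "\<phi> c = 1"
    using qspan_separation by blast
  obtain g where g: "\<And>a b. a \<in> units_rep P \<Longrightarrow> b \<in> units_rep P \<Longrightarrow> \<phi> (ygen a b) = g a + g b - g (a * b mod P)"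
    and additive: "\<And>a b. a \<in> units_rep P \<Longrightarrow> b \<in> units_rep P \<Longrightarrow> degree a + degree b < degree P \<Longrightarrow>
      g (a * b) = g a + g b"
    using coboundary_of_rels_annihilator[OF \<phi>] by blast
  have fin: "fin_supp c" and units: "\<And>p. c p \<noteq> 0 \<Longrightarrow> fst p \<in> units_rep P \<and> snd p \<in> units_rep P"
    using c by (auto simp: freeY_def)
  define S where "S = (\<Union>p\<in>{p. c p \<noteq> 0}. {fst p, snd p, fst p * snd p mod P})"
  have S: "finite S" using fin by (simp add: S_def fin_supp_def)
  have "\<phi> c = (\<Sum>p\<in>{p. c p \<noteq> 0}. c p * \<phi> (ygen (fst p) (snd p)))"
    using fin by (subst fin_supp_expansion) (simp_all add: rat_linear_sum[OF \<phi>(1)] fin_supp_def)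
  also have "\<dots> = (\<Sum>p\<in>{p. c p \<noteq> 0}. c p * (g (fst p) + g (snd p) - g (fst p * snd p mod P)))"
    using units g by (intro sum.cong) auto
  also have "\<dots> = (\<Sum>x\<in>S. Phi P c x * g x)"
  proof (rule Phi_pairing[OF fin S, symmetric])
    show "{fst p, snd p, fst p * snd p mod P} \<subseteq> S" if "c p \<noteq> 0" for p
      unfolding S_def using that by blast
  qed
  also have "\<dots> = 0"
    using additive Phi_in_Vspace[OF c] zero S Phi_support[of P c] by (intro zero_FtQ_annihilated) (auto simp: S_def)
  finally show False using \<open>\<phi> c = 1\<close> by simp
qed

lemma kernel_subset_image:
  assumes w: "w \<in> Vspace P" and sw: "sP_zero P w"
  shows "\<exists>c\<in>freeY P. zero_FtQ (\<lambda>f. Phi P c f - w f)"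
proof -
  have supp: "fin_supp w" "{f. w f \<noteq> 0} \<subseteq> units_rep P" using w by (auto simp: Vspace_def)
  obtain N :: nat and X Y where N: "N > 0" and XY: "set_mset X \<subseteq> {f. w f \<noteq> 0}" "set_mset Y \<subseteq> {f. w f \<noteq> 0}"
    and count: "\<And>f. of_nat (count X f) - of_nat (count Y f) = of_nat N * w f"
    and prod: "prod_mset X mod P = prod_mset Y mod P"
    by (rule tensorQ_zero_multisets[OF supp(1) sw[unfolded sP_zero_def]], rule that)
  obtain xs ys where xs: "mset xs = X" and ys: "mset ys = Y" using ex_mset by metis
  have units: "set xs \<subseteq> units_rep P" "set ys \<subseteq> units_rep P"
    using XY supp(2) xs ys by auto
  define c where "c = (\<lambda>q. (1 / of_nat N) * telescope P 1 xs q + (- 1 / of_nat N) * telescope P 1 ys q)"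
  have Phi_c: "Phi P c f = w f" for f
  proof -
    have "Phi P (telescope P 1 xs) f - Phi P (telescope P 1 ys) f = of_nat (count X f) - of_nat (count Y f)"
      using prod xs ys units one_in_units_rep by (simp add: Phi_telescope prod_mset_prod_list[symmetric])
    moreover have "Phi P c f = (Phi P (telescope P 1 xs) f - Phi P (telescope P 1 ys) f) / of_nat N"
      unfolding c_def Phi_linear[OF fin_supp_telescope fin_supp_telescope] by (simp add: diff_divide_distrib)
    ultimately show ?thesis using count N by simp
  qed
  moreover have "c \<in> freeY P"
    unfolding c_def using one_in_units_rep units by (intro freeY_linear telescope_in_freeY)
  moreover have "zero_FtQ (\<lambda>f. Phi P c f - w f)"
    unfolding Phi_c zero_FtQ_def
    using equality.tensorQ_zero_zero by simp
  ultimately show ?thesis by blast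
qed

end

theorem lemma5:
  fixes P :: "'a::field poly"
  assumes "lead_coeff P = 1" and "irreducible P" and "degree P \<ge> 1"
  shows "(\<forall>c\<in>freeY P. Phi P c \<in> Vspace P \<and> sP_zero P (Phi P c))
       \<and> (\<forall>c\<in>freeY P. zero_FtQ (Phi P c) \<longleftrightarrow> c \<in> qspan (rels P))
       \<and> (\<forall>w\<in>Vspace P. sP_zero P w \<longrightarrow>
            (\<exists>c\<in>freeY P. zero_FtQ (\<lambda>f. Phi P c f - w f)))"
proof -
  interpret irreducible_modulus P using assms(2) by unfold_locales
  show ?thesis
    using Phi_in_Vspace sP_zero_Phi in_qspan_if_zero_FtQ_Phi zero_FtQ_Phi_if_in_qspan kernel_subset_image
    by blast
qed

end
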